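(* If \(G\) admits a centroid map, then it has property RD.
   Context: \(G\) is a finitely generated group with a word-length \(\ell\), \(B_{G}(r)=\{g:\ell(g)\leq r\}\). \(G\) acts by isometries on a metric space \((X,d)\) with uniformly bounded stabilizers. A centroid map is a map \(m\colon G^{2}\to X\) such that for some polynomial \(P\): (1) \(\lvert m(B_{G}(r)\times\{h\})\rvert\leq P(r)\) for all \(h\in G\); (2) \(\lvert m(\{g\}\times G)\rvert\leq P(r)\) for all \(g\in B_{G}(r)\); (3) \(\lvert\{g^{-1}m(g,gh):g\in B_{G}(r)\}\rvert\leq P(r)\) for all \(h\in G\). Property RD means there is a polynomial \(Q\) with \(\lVert f\rVert_{op}\leq Q(\ell(f))\lVert f\rVert_{2}\) for all \(f\in\mathbb{C}[G]\), where \(\ell(f)=\max\{\ell(x):f(x)\neq0\}\), \(\lVert f\rVert_{2}\) is the \(\ell^{2}\)-norm and \(\lVert f\rVert_{op}\) the operator norm of convolution by \(f\) on \(\ell^{2}(G)\). *)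

theory Defs
  imports "HOL-Analysis.Analysis" "HOL-Algebra.Group" "HOL-Algebra.Generated_Groups"
          "HOL-Computational_Algebra.Polynomial"
begin

definition word_length :: "('g, 'b) monoid_scheme \<Rightarrow> 'g set \<Rightarrow> 'g \<Rightarrow> nat" where
  "word_length G S g =
     (LEAST n. \<exists>ws. length ws = n \<and> set ws \<subseteq> S \<union> (\<lambda>s. inv\<^bsub>G\<^esub> s) ` S
                   \<and> foldr (\<lambda>a b. a \<otimes>\<^bsub>G\<^esub> b) ws \<one>\<^bsub>G\<^esub> = g)"

definition ball_G :: "('g, 'b) monoid_scheme \<Rightarrow> 'g set \<Rightarrow> nat \<Rightarrow> 'g set" where
  "ball_G G S r = {g \<in> carrier G. word_length G S g \<le> r}"

definition isometric_action :: "('g, 'b) monoid_scheme \<Rightarrow> ('g \<Rightarrow> 'x::metric_space \<Rightarrow> 'x) \<Rightarrow> bool" where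
  "isometric_action G act \<longleftrightarrow>
     (\<forall>x. act \<one>\<^bsub>G\<^esub> x = x) \<and>
     (\<forall>g\<in>carrier G. \<forall>h\<in>carrier G. \<forall>x. act (g \<otimes>\<^bsub>G\<^esub> h) x = act g (act h x)) \<and>
     (\<forall>g\<in>carrier G. \<forall>x y. dist (act g x) (act g y) = dist x y)"

definition uniformly_bounded_stabilizers :: "('g, 'b) monoid_scheme \<Rightarrow> ('g \<Rightarrow> 'x \<Rightarrow> 'x) \<Rightarrow> bool" where
  "uniformly_bounded_stabilizers G act \<longleftrightarrow>
     (\<exists>C::nat. \<forall>x. finite {g \<in> carrier G. act g x = x} \<and> card {g \<in> carrier G. act g x = x} \<le> C)"

definition card_le :: "'a set \<Rightarrow> real \<Rightarrow> bool" where
  "card_le A b \<longleftrightarrow> finite A \<and> real (card A) \<le> b"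

definition centroid_map :: "('g, 'b) monoid_scheme \<Rightarrow> 'g set \<Rightarrow> ('g \<Rightarrow> 'x \<Rightarrow> 'x) \<Rightarrow> ('g \<Rightarrow> 'g \<Rightarrow> 'x) \<Rightarrow> bool" where
  "centroid_map G S act m \<longleftrightarrow>
     (\<exists>P :: real poly.
        (\<forall>r::nat. \<forall>h\<in>carrier G. card_le ((\<lambda>g. m g h) ` ball_G G S r) (poly P (real r))) \<and>
        (\<forall>r::nat. \<forall>g\<in>ball_G G S r. card_le ((\<lambda>h. m g h) ` carrier G) (poly P (real r))) \<and>
        (\<forall>r::nat. \<forall>h\<in>carrier G.
           card_le ((\<lambda>g. act (inv\<^bsub>G\<^esub> g) (m g (g \<otimes>\<^bsub>G\<^esub> h))) ` ball_G G S r) (poly P (real r))))"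

definition group_algebra :: "('g, 'b) monoid_scheme \<Rightarrow> ('g \<Rightarrow> complex) set" where
  "group_algebra G = {f. finite {x. f x \<noteq> 0} \<and> {x. f x \<noteq> 0} \<subseteq> carrier G}"

definition length_fun :: "('g, 'b) monoid_scheme \<Rightarrow> 'g set \<Rightarrow> ('g \<Rightarrow> complex) \<Rightarrow> nat" where
  "length_fun G S f = (if {x. f x \<noteq> 0} = {} then 0 else Max (word_length G S ` {x. f x \<noteq> 0}))"

definition l2 :: "('g, 'b) monoid_scheme \<Rightarrow> ('g \<Rightarrow> complex) set" where
  "l2 G = {\<xi>. (\<lambda>x. (cmod (\<xi> x))\<^sup>2) summable_on carrier G}"

definition l2_norm :: "('g, 'b) monoid_scheme \<Rightarrow> ('g \<Rightarrow> complex) \<Rightarrow> real" where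
  "l2_norm G \<xi> = sqrt (infsum (\<lambda>x. (cmod (\<xi> x))\<^sup>2) (carrier G))"

definition convolution :: "('g, 'b) monoid_scheme \<Rightarrow> ('g \<Rightarrow> complex) \<Rightarrow> ('g \<Rightarrow> complex) \<Rightarrow> 'g \<Rightarrow> complex" where
  "convolution G f \<xi> x = (\<Sum>y\<in>{y. f y \<noteq> 0}. f y * \<xi> (inv\<^bsub>G\<^esub> y \<otimes>\<^bsub>G\<^esub> x))"

definition op_norm :: "('g, 'b) monoid_scheme \<Rightarrow> ('g \<Rightarrow> complex) \<Rightarrow> real" where
  "op_norm G f = Sup {l2_norm G (convolution G f \<xi>) | \<xi>. \<xi> \<in> l2 G \<and> l2_norm G \<xi> \<le> 1}"

definition property_RD :: "('g, 'b) monoid_scheme \<Rightarrow> 'g set \<Rightarrow> bool" where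
  "property_RD G S \<longleftrightarrow>
     (\<exists>Q :: real poly. \<forall>f\<in>group_algebra G.
        op_norm G f \<le> poly Q (real (length_fun G S f)) * l2_norm G f)"

end

theory Submission
  imports Defs
begin

(* Let f be supported in the ball of radius n and \<xi> \<in> l2(G). Testing f * \<xi> against itself gives
   \<Sum>x |f * \<xi>|(x)^2 \<le> \<Sum>(y, x) |f(y)| |f * \<xi>|(x) |\<xi>(y^-1 x)|. Group the pairs (y, x) by their centre
   m(y, x) and apply Cauchy-Schwarz on each group. By conditions (1) and (2) every y and every x
   meets at most P(n) groups; by condition (3) and the stabilizer bound C, inside one group at most
   C P(n) pairs share the value y^-1 x. Hence |f * \<xi>|^2 \<le> sqrt(C P(n)) P(n) |f| |\<xi>| |f * \<xi>| in l2 norms,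
   and sqrt(C P) \<le> (C + P)/2 makes the constant polynomial in n. *)

lemma L2_set_mono_set:
  assumes "finite B" "A \<subseteq> B"
  shows "L2_set f A \<le> L2_set f B"
  unfolding L2_set_def by (intro real_sqrt_le_mono sum_mono2) (use assms in auto)

lemma L2_set_Times:
  "L2_set (\<lambda>p. a (fst p) * e (snd p)) (A \<times> B) = L2_set a A * L2_set e B"
proof -
  have "(\<Sum>p\<in>A \<times> B. (a (fst p) * e (snd p))\<^sup>2) = (\<Sum>x\<in>A. (a x)\<^sup>2) * (\<Sum>y\<in>B. (e y)\<^sup>2)"
    by (simp add: sum_product sum.cartesian_product' power_mult_distrib)
  then show ?thesis
    unfolding L2_set_def by (simp add: real_sqrt_mult)
qed

lemma L2_set_comp_le:
  assumes "finite T" and fibre: "\<And>k. real (card {p\<in>T. g p = k}) \<le> M"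
  shows "L2_set (\<lambda>p. b (g p)) T \<le> sqrt M * L2_set b (g ` T)"
proof -
  have "(\<Sum>p\<in>T. (b (g p))\<^sup>2) = (\<Sum>k\<in>g ` T. \<Sum>p\<in>{p\<in>T. g p = k}. (b (g p))\<^sup>2)"
    by (rule sum.group[symmetric]) (use assms in auto)
  also have "\<dots> = (\<Sum>k\<in>g ` T. real (card {p\<in>T. g p = k}) * (b k)\<^sup>2)"
    by (rule sum.cong) auto
  also have "\<dots> \<le> (\<Sum>k\<in>g ` T. M * (b k)\<^sup>2)"
    by (intro sum_mono mult_right_mono fibre) simp
  finally have "(\<Sum>p\<in>T. (b (g p))\<^sup>2) \<le> M * (\<Sum>k\<in>g ` T. (b k)\<^sup>2)"
    by (simp add: sum_distrib_left)
  then show ?thesis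
    unfolding L2_set_def by (metis real_sqrt_le_mono real_sqrt_mult)
qed

lemma L2_set_double_counting:
  assumes "finite A" "finite B" and deg: "\<And>y. y \<in> B \<Longrightarrow> real (card {x\<in>A. R x y}) \<le> P"
  shows "L2_set (\<lambda>x. L2_set f {y\<in>B. R x y}) A \<le> sqrt P * L2_set f B"
proof -
  have "(\<Sum>x\<in>A. (L2_set f {y\<in>B. R x y})\<^sup>2) = (\<Sum>x\<in>A. \<Sum>y\<in>{y\<in>B. R x y}. (f y)\<^sup>2)"
    unfolding L2_set_def by (simp add: sum_nonneg)
  also have "\<dots> = (\<Sum>y\<in>B. real (card {x\<in>A. R x y}) * (f y)\<^sup>2)"
    using sum.swap_restrict[OF assms(1,2), of "\<lambda>x y. (f y)\<^sup>2" R] by simp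
  also have "\<dots> \<le> (\<Sum>y\<in>B. P * (f y)\<^sup>2)"
    by (intro sum_mono mult_right_mono deg) simp_all
  finally have "(\<Sum>x\<in>A. (L2_set f {y\<in>B. R x y})\<^sup>2) \<le> P * (\<Sum>y\<in>B. (f y)\<^sup>2)"
    by (simp add: sum_distrib_left)
  then show ?thesis
    unfolding L2_set_def[of _ A] L2_set_def[of f B] by (metis real_sqrt_le_mono real_sqrt_mult)
qed

lemma trilinear_sum_le_on_subset_Times:
  assumes "finite A" "finite B" "T \<subseteq> A \<times> B" and fibre: "\<And>l. real (card {p\<in>T. g p = l}) \<le> M"
  shows "(\<Sum>p\<in>T. \<bar>a (fst p)\<bar> * \<bar>e (snd p)\<bar> * \<bar>b (g p)\<bar>)
    \<le> L2_set a A * L2_set e B * (sqrt M * L2_set b (g ` T))"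
proof -
  have "finite T"
    using assms(1-3) by (meson finite_SigmaI finite_subset)
  have "L2_set (\<lambda>p. a (fst p) * e (snd p)) T \<le> L2_set (\<lambda>p. a (fst p) * e (snd p)) (A \<times> B)"
    by (rule L2_set_mono_set) (use assms(1-3) in auto)
  also have "\<dots> = L2_set a A * L2_set e B"
    by (rule L2_set_Times)
  finally have "L2_set (\<lambda>p. a (fst p) * e (snd p)) T \<le> L2_set a A * L2_set e B" .
  moreover have "L2_set (\<lambda>p. b (g p)) T \<le> sqrt M * L2_set b (g ` T)"
    by (rule L2_set_comp_le[OF \<open>finite T\<close> fibre])
  ultimately have "(\<Sum>p\<in>T. \<bar>a (fst p) * e (snd p)\<bar> * \<bar>b (g p)\<bar>)
      \<le> L2_set a A * L2_set e B * (sqrt M * L2_set b (g ` T))"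
    by (intro order_trans[OF L2_set_mult_ineq] mult_mono) auto
  then show ?thesis
    by (simp add: abs_mult)
qed

lemma trilinear_sum_le_by_centres:
  fixes a :: "'y \<Rightarrow> real" and e :: "'f \<Rightarrow> real" and b :: "'k \<Rightarrow> real"
    and c :: "'y \<Rightarrow> 'f \<Rightarrow> 'c" and k :: "'y \<Rightarrow> 'f \<Rightarrow> 'k"
  assumes "finite Y" "finite F" "0 \<le> P"
    and row: "\<And>y. y \<in> Y \<Longrightarrow> real (card (c y ` F)) \<le> P"
    and column: "\<And>x. x \<in> F \<Longrightarrow> real (card ((\<lambda>y. c y x) ` Y)) \<le> P"
    and fibre: "\<And>z l. real (card {p\<in>Y \<times> F. c (fst p) (snd p) = z \<and> k (fst p) (snd p) = l}) \<le> M"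
  shows "(\<Sum>p\<in>Y \<times> F. \<bar>a (fst p)\<bar> * \<bar>e (snd p)\<bar> * \<bar>b (k (fst p) (snd p))\<bar>)
    \<le> sqrt M * P * L2_set a Y * L2_set e F * L2_set b ((\<lambda>p. k (fst p) (snd p)) ` (Y \<times> F))"
proof -
  define cp where "cp p = c (fst p) (snd p)" for p
  define kp where "kp p = k (fst p) (snd p)" for p
  define Z where "Z = Y \<times> F"
  define T where "T z = {p\<in>Z. cp p = z}" for z
  define Yz where "Yz z = {y\<in>Y. z \<in> c y ` F}" for z
  define Fz where "Fz z = {x\<in>F. z \<in> (\<lambda>y. c y x) ` Y}" for z
  define Lb where "Lb = L2_set b (kp ` Z)"
  have "finite Z" unfolding Z_def using assms(1,2) by simp
  have M0: "0 \<le> M" using fibre[of undefined undefined] by linarith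
  have on_fibre: "(\<Sum>p\<in>T z. \<bar>a (fst p)\<bar> * \<bar>e (snd p)\<bar> * \<bar>b (kp p)\<bar>)
      \<le> L2_set a (Yz z) * L2_set e (Fz z) * (sqrt M * Lb)" for z
  proof -
    have "(\<Sum>p\<in>T z. \<bar>a (fst p)\<bar> * \<bar>e (snd p)\<bar> * \<bar>b (kp p)\<bar>)
        \<le> L2_set a (Yz z) * L2_set e (Fz z) * (sqrt M * L2_set b (kp ` T z))"
      by (rule trilinear_sum_le_on_subset_Times)
        (use assms(1,2) fibre in \<open>auto simp: Yz_def Fz_def T_def Z_def cp_def kp_def\<close>)
    also have "\<dots> \<le> L2_set a (Yz z) * L2_set e (Fz z) * (sqrt M * Lb)"
      unfolding Lb_def
      by (intro mult_left_mono L2_set_mono_set) (use \<open>finite Z\<close> M0 in \<open>auto simp: T_def\<close>)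
    finally show ?thesis .
  qed
  have row_double: "L2_set (\<lambda>z. L2_set a (Yz z)) (cp ` Z) \<le> sqrt P * L2_set a Y"
    unfolding Yz_def
  proof (rule L2_set_double_counting)
    show "real (card {z\<in>cp ` Z. z \<in> c y ` F}) \<le> P" if "y \<in> Y" for y
      using row[OF that] card_mono[of "c y ` F" "{z\<in>cp ` Z. z \<in> c y ` F}"] assms(2) by force
  qed (use \<open>finite Z\<close> assms(1) in auto)
  have column_double: "L2_set (\<lambda>z. L2_set e (Fz z)) (cp ` Z) \<le> sqrt P * L2_set e F"
    unfolding Fz_def
  proof (rule L2_set_double_counting)
    show "real (card {z\<in>cp ` Z. z \<in> (\<lambda>y. c y x) ` Y}) \<le> P" if "x \<in> F" for x
      using column[OF that] card_mono[of "(\<lambda>y. c y x) ` Y" "{z\<in>cp ` Z. z \<in> (\<lambda>y. c y x) ` Y}"] assms(1)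
      by force
  qed (use \<open>finite Z\<close> assms(2) in auto)
  have "(\<Sum>p\<in>Z. \<bar>a (fst p)\<bar> * \<bar>e (snd p)\<bar> * \<bar>b (kp p)\<bar>)
      = (\<Sum>z\<in>cp ` Z. \<Sum>p\<in>T z. \<bar>a (fst p)\<bar> * \<bar>e (snd p)\<bar> * \<bar>b (kp p)\<bar>)"
    unfolding T_def by (rule sum.group[symmetric]) (use \<open>finite Z\<close> in auto)
  also have "\<dots> \<le> (\<Sum>z\<in>cp ` Z. \<bar>L2_set a (Yz z)\<bar> * \<bar>L2_set e (Fz z)\<bar>) * (sqrt M * Lb)"
    unfolding sum_distrib_right by (rule sum_mono) (use on_fibre in simp)
  also have "\<dots> \<le> (sqrt P * L2_set a Y) * (sqrt P * L2_set e F) * (sqrt M * Lb)"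
    using M0 \<open>0 \<le> P\<close> row_double column_double
    by (intro mult_right_mono order_trans[OF L2_set_mult_ineq] mult_mono) (auto simp: Lb_def)
  also have "\<dots> = sqrt M * P * L2_set a Y * L2_set e F * Lb"
    using \<open>0 \<le> P\<close> by (simp add: mult_ac real_sqrt_mult_self flip: real_sqrt_mult)
  finally show ?thesis unfolding Z_def Lb_def kp_def .
qed

lemma card_le_nonneg: "card_le A b \<Longrightarrow> 0 \<le> b"
  unfolding card_le_def by (meson of_nat_0_le_iff order_trans)

lemma card_le_subset: "card_le A b \<Longrightarrow> B \<subseteq> A \<Longrightarrow> real (card B) \<le> b"
  unfolding card_le_def by (meson card_mono of_nat_le_iff order_trans)

lemma support_subset_ball_length_fun:
  assumes "f \<in> group_algebra G"
  shows "{x. f x \<noteq> 0} \<subseteq> ball_G G S (length_fun G S f)"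
  using assms unfolding group_algebra_def ball_G_def length_fun_def by auto

lemma l2_norm_group_algebra:
  assumes "f \<in> group_algebra G"
  shows "l2_norm G f = L2_set (\<lambda>x. cmod (f x)) {x. f x \<noteq> 0}"
proof -
  have "infsum (\<lambda>x. (cmod (f x))\<^sup>2) (carrier G) = infsum (\<lambda>x. (cmod (f x))\<^sup>2) {x. f x \<noteq> 0}"
    by (rule infsum_cong_neutral) (use assms in \<open>auto simp: group_algebra_def\<close>)
  then show ?thesis
    using assms unfolding l2_norm_def L2_set_def group_algebra_def by simp
qed

lemma L2_set_le_l2_norm:
  assumes "\<xi> \<in> l2 G" "finite K" "K \<subseteq> carrier G"
  shows "L2_set (\<lambda>x. cmod (\<xi> x)) K \<le> l2_norm G \<xi>"
  unfolding L2_set_def l2_norm_def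
  by (intro real_sqrt_le_mono finite_sum_le_infsum) (use assms in \<open>auto simp: l2_def\<close>)

lemma l2_norm_nonneg: "0 \<le> l2_norm G \<xi>"
  unfolding l2_norm_def by (simp add: infsum_nonneg)

lemma l2_norm_le_if_L2_set_le:
  assumes "\<And>F. finite F \<Longrightarrow> F \<subseteq> carrier G \<Longrightarrow> L2_set (\<lambda>x. cmod (\<eta> x)) F \<le> B"
  shows "l2_norm G \<eta> \<le> B"
proof -
  have "0 \<le> B" using assms[of "{}"] by simp
  have "infsum (\<lambda>x. (cmod (\<eta> x))\<^sup>2) (carrier G) \<le> B\<^sup>2"
  proof (cases "(\<lambda>x. (cmod (\<eta> x))\<^sup>2) summable_on carrier G")
    case True
    show ?thesis
    proof (rule infsum_le_finite_sums[OF True])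
      fix F assume "finite F" "F \<subseteq> carrier G"
      then have "sqrt (\<Sum>x\<in>F. (cmod (\<eta> x))\<^sup>2) \<le> B"
        using assms unfolding L2_set_def by blast
      then have "(sqrt (\<Sum>x\<in>F. (cmod (\<eta> x))\<^sup>2))\<^sup>2 \<le> B\<^sup>2"
        by (rule power_mono) (simp add: sum_nonneg)
      then show "(\<Sum>x\<in>F. (cmod (\<eta> x))\<^sup>2) \<le> B\<^sup>2"
        by (simp add: sum_nonneg)
    qed
  qed (simp add: infsum_not_exists)
  then show ?thesis
    unfolding l2_norm_def using \<open>0 \<le> B\<close> real_le_lsqrt by blast
qed

lemma op_norm_le:
  assumes "\<And>\<xi>. \<xi> \<in> l2 G \<Longrightarrow> l2_norm G (convolution G f \<xi>) \<le> K * l2_norm G \<xi>" and "0 \<le> K"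
  shows "op_norm G f \<le> K"
  unfolding op_norm_def
proof (rule cSup_least)
  have "(\<lambda>_. 0) \<in> l2 G \<and> l2_norm G (\<lambda>_. 0) \<le> 1"
    by (simp add: l2_def l2_norm_def)
  then show "{l2_norm G (convolution G f \<xi>) |\<xi>. \<xi> \<in> l2 G \<and> l2_norm G \<xi> \<le> 1} \<noteq> {}"
    by blast
  fix z assume "z \<in> {l2_norm G (convolution G f \<xi>) |\<xi>. \<xi> \<in> l2 G \<and> l2_norm G \<xi> \<le> 1}"
  then obtain \<xi> where "z = l2_norm G (convolution G f \<xi>)" "\<xi> \<in> l2 G" "l2_norm G \<xi> \<le> 1"
    by blast
  then show "z \<le> K"
    using assms mult_left_mono[of "l2_norm G \<xi>" 1 K] by fastforce
qed

lemma norm_convolution_le: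
  "cmod (convolution G f \<xi> x) \<le> (\<Sum>y\<in>{y. f y \<noteq> 0}. cmod (f y) * cmod (\<xi> (inv\<^bsub>G\<^esub> y \<otimes>\<^bsub>G\<^esub> x)))"
  unfolding convolution_def by (rule order_trans[OF norm_sum]) (simp add: norm_mult)

definition centroid_bounds ::
    "('g, 'b) monoid_scheme \<Rightarrow> 'g set \<Rightarrow> ('g \<Rightarrow> 'x \<Rightarrow> 'x) \<Rightarrow> ('g \<Rightarrow> 'g \<Rightarrow> 'x) \<Rightarrow> nat \<Rightarrow> real \<Rightarrow> bool"
  where "centroid_bounds G S act m r B \<longleftrightarrow>
    (\<forall>h\<in>carrier G. card_le ((\<lambda>g. m g h) ` ball_G G S r) B) \<and>
    (\<forall>g\<in>ball_G G S r. card_le (m g ` carrier G) B) \<and>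
    (\<forall>h\<in>carrier G. card_le ((\<lambda>g. act (inv\<^bsub>G\<^esub> g) (m g (g \<otimes>\<^bsub>G\<^esub> h))) ` ball_G G S r) B)"

lemma centroid_map_iff_centroid_bounds:
  "centroid_map G S act m \<longleftrightarrow> (\<exists>P. \<forall>r. centroid_bounds G S act m r (poly P (real r)))"
  unfolding centroid_map_def centroid_bounds_def by blast

lemma centroid_bounds_nonneg:
  assumes "group G" "centroid_bounds G S act m r B"
  shows "0 \<le> B"
  using assms card_le_nonneg group.is_monoid monoid.one_closed unfolding centroid_bounds_def by metis

locale bounded_stabilizer_action = group G for G :: "('g, 'b) monoid_scheme" (structure) +
  fixes act :: "'g \<Rightarrow> 'x \<Rightarrow> 'x" and C :: nat
  assumes act_one [simp]: "act \<one> x = x"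
    and act_mult: "g \<in> carrier G \<Longrightarrow> h \<in> carrier G \<Longrightarrow> act (g \<otimes> h) x = act g (act h x)"
    and finite_stabilizer: "finite {g \<in> carrier G. act g x = x}"
    and card_stabilizer_le: "card {g \<in> carrier G. act g x = x} \<le> C"

lemma bounded_stabilizer_actionI:
  assumes "group G" "isometric_action G act" "uniformly_bounded_stabilizers G act"
  shows "\<exists>C. bounded_stabilizer_action G act C"
proof -
  obtain C where "\<forall>x. finite {g \<in> carrier G. act g x = x} \<and> card {g \<in> carrier G. act g x = x} \<le> C"
    using assms(3) unfolding uniformly_bounded_stabilizers_def by blast
  with assms(1,2) have "bounded_stabilizer_action G act C"
    unfolding bounded_stabilizer_action_def bounded_stabilizer_action_axioms_def isometric_action_def
    by blast
  then show ?thesis ..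
qed

context bounded_stabilizer_action
begin

lemma transporter_finite_card_le:
  "finite {y \<in> carrier G. act (inv y) z = d} \<and> card {y \<in> carrier G. act (inv y) z = d} \<le> C"
proof (cases "{y \<in> carrier G. act (inv y) z = d} = {}")
  case False
  let ?T = "{y \<in> carrier G. act (inv y) z = d}"
  from False obtain y0 where y0: "y0 \<in> carrier G" "act (inv y0) z = d" by auto
  have inj: "inj_on (\<lambda>y. y \<otimes> inv y0) ?T"
    by (rule inj_onI) (use y0 in auto)
  have into_stabilizer: "(\<lambda>y. y \<otimes> inv y0) ` ?T \<subseteq> {g \<in> carrier G. act g z = z}"
  proof (rule image_subsetI)
    fix y assume "y \<in> ?T"
    then have y: "y \<in> carrier G" "act (inv y) z = d" by auto
    have "act (y \<otimes> inv y0) z = act y (act (inv y) z)"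
      using y y0 by (simp add: act_mult)
    also have "\<dots> = act (y \<otimes> inv y) z"
      by (rule act_mult[symmetric]) (use y in simp_all)
    also have "\<dots> = z"
      using y by simp
    finally show "y \<otimes> inv y0 \<in> {g \<in> carrier G. act g z = z}"
      using y y0 by simp
  qed
  have "finite ?T"
    using finite_imageD[OF finite_subset[OF into_stabilizer finite_stabilizer] inj] .
  moreover have "card ?T \<le> C"
    using card_inj_on_le[OF inj into_stabilizer finite_stabilizer] card_stabilizer_le
    by (rule order_trans)
  ultimately show ?thesis ..
next
  case True
  show ?thesis
    unfolding True by simp
qed

text \<open>A pair (y, x) with y\<inverse>x = k is determined by y, and y is determined, up to the
  stabilizer of the centre z, by the point y\<inverse>z, which lies in D.\<close>
lemma card_centroid_fibre_le:
  fixes m :: "'g \<Rightarrow> 'g \<Rightarrow> 'x"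
  assumes "Y \<subseteq> carrier G" "F \<subseteq> carrier G" "k \<in> carrier G" "finite D"
    and D: "\<And>y. y \<in> Y \<Longrightarrow> act (inv y) (m y (y \<otimes> k)) \<in> D"
  shows "card {p\<in>Y \<times> F. m (fst p) (snd p) = z \<and> inv (fst p) \<otimes> snd p = k} \<le> C * card D"
proof -
  let ?V = "{y\<in>Y. m y (y \<otimes> k) = z}"
  let ?U = "\<Union>d\<in>D. {y \<in> carrier G. act (inv y) z = d}"
  have "?V \<subseteq> ?U"
  proof
    fix y assume "y \<in> ?V"
    then have "y \<in> carrier G" "act (inv y) z \<in> D"
      using assms(1) D by auto
    then show "y \<in> ?U" by blast
  qed
  moreover have "finite ?U"
    by (intro finite_UN_I \<open>finite D\<close> conjunct1[OF transporter_finite_card_le])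
  ultimately have "finite ?V" by (rule finite_subset)
  have "{p\<in>Y \<times> F. m (fst p) (snd p) = z \<and> inv (fst p) \<otimes> snd p = k} \<subseteq> (\<lambda>y. (y, y \<otimes> k)) ` ?V"
  proof
    fix p assume "p \<in> {p\<in>Y \<times> F. m (fst p) (snd p) = z \<and> inv (fst p) \<otimes> snd p = k}"
    then obtain y x where p: "p = (y, x)" "y \<in> Y" "x \<in> F" "m y x = z" "inv y \<otimes> x = k"
      by auto
    moreover have "y \<in> carrier G" "x \<in> carrier G"
      using p assms(1,2) by auto
    ultimately have "x = y \<otimes> k"
      by (auto simp: m_assoc[symmetric])
    with p show "p \<in> (\<lambda>y. (y, y \<otimes> k)) ` ?V" by auto
  qed
  then have "card {p\<in>Y \<times> F. m (fst p) (snd p) = z \<and> inv (fst p) \<otimes> snd p = k}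
      \<le> card ((\<lambda>y. (y, y \<otimes> k)) ` ?V)"
    by (intro card_mono finite_imageI \<open>finite ?V\<close>)
  also have "\<dots> \<le> card ?V"
    by (rule card_image_le[OF \<open>finite ?V\<close>])
  also have "\<dots> \<le> card ?U"
    by (rule card_mono) fact+
  also have "\<dots> \<le> (\<Sum>d\<in>D. card {y \<in> carrier G. act (inv y) z = d})"
    by (rule card_UN_le[OF \<open>finite D\<close>])
  also have "\<dots> \<le> (\<Sum>d\<in>D. C)"
    by (intro sum_mono conjunct2[OF transporter_finite_card_le])
  also have "\<dots> = C * card D"
    by simp
  finally show ?thesis .
qed

lemma card_centroid_fibre_le_bound:
  fixes m :: "'g \<Rightarrow> 'g \<Rightarrow> 'x" and B :: real
  assumes "centroid_bounds G S act m n B" "Y \<subseteq> ball_G G S n" "F \<subseteq> carrier G"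
  shows "real (card {p\<in>Y \<times> F. m (fst p) (snd p) = z \<and> inv (fst p) \<otimes> snd p = k}) \<le> C * B"
proof (cases "k \<in> carrier G")
  case True
  let ?D = "(\<lambda>g. act (inv g) (m g (g \<otimes> k))) ` ball_G G S n"
  have D: "card_le ?D B"
    using assms(1) True unfolding centroid_bounds_def by blast
  have "card {p\<in>Y \<times> F. m (fst p) (snd p) = z \<and> inv (fst p) \<otimes> snd p = k} \<le> C * card ?D"
    by (rule card_centroid_fibre_le) (use assms(2,3) True D in \<open>auto simp: card_le_def ball_G_def\<close>)
  then have "real (card {p\<in>Y \<times> F. m (fst p) (snd p) = z \<and> inv (fst p) \<otimes> snd p = k})
      \<le> real C * real (card ?D)"
    by (simp only: of_nat_mult[symmetric] of_nat_le_iff)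
  also have "\<dots> \<le> C * B"
    using D by (intro mult_left_mono) (simp_all add: card_le_def)
  finally show ?thesis .
next
  case False
  then have no_pairs: "{p\<in>Y \<times> F. m (fst p) (snd p) = z \<and> inv (fst p) \<otimes> snd p = k} = {}"
    using assms(2,3) by (auto simp: ball_G_def)
  show ?thesis
    unfolding no_pairs using centroid_bounds_nonneg[OF is_group assms(1)] by simp
qed

lemma L2_set_convolution_le:
  fixes m :: "'g \<Rightarrow> 'g \<Rightarrow> 'x" and B :: real
  assumes bounds: "centroid_bounds G S act m n B"
    and f: "f \<in> group_algebra G" and support: "{x. f x \<noteq> 0} \<subseteq> ball_G G S n"
    and "\<xi> \<in> l2 G" "finite F" "F \<subseteq> carrier G"
  shows "L2_set (\<lambda>x. cmod (convolution G f \<xi> x)) F \<le> sqrt (C * B) * B * l2_norm G f * l2_norm G \<xi>"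
proof -
  define Y where "Y = {x. f x \<noteq> 0}"
  define a where "a y = cmod (f y)" for y
  define b where "b k = cmod (\<xi> k)" for k
  define e where "e x = cmod (convolution G f \<xi> x)" for x
  define L where "L = L2_set e F"
  have "finite Y" "Y \<subseteq> carrier G"
    using f unfolding group_algebra_def Y_def by auto
  have "0 \<le> B"
    by (rule centroid_bounds_nonneg[OF is_group bounds])
  have row: "real (card (m y ` F)) \<le> B" if "y \<in> Y" for y
    using bounds that support \<open>F \<subseteq> carrier G\<close> card_le_subset
    unfolding centroid_bounds_def Y_def by (metis image_mono mem_Collect_eq subsetD)
  have column: "real (card ((\<lambda>y. m y x) ` Y)) \<le> B" if "x \<in> F" for x
    using bounds that support \<open>F \<subseteq> carrier G\<close> card_le_subset
    unfolding centroid_bounds_def Y_def by (metis image_mono subsetD)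
  have "L\<^sup>2 = (\<Sum>x\<in>F. e x * e x)"
    unfolding L_def L2_set_def by (simp add: sum_nonneg power2_eq_square)
  also have "\<dots> \<le> (\<Sum>x\<in>F. e x * (\<Sum>y\<in>Y. a y * b (inv y \<otimes> x)))"
    by (intro sum_mono mult_left_mono) (simp_all add: e_def a_def b_def Y_def norm_convolution_le)
  also have "\<dots> = (\<Sum>p\<in>Y \<times> F. \<bar>a (fst p)\<bar> * \<bar>e (snd p)\<bar> * \<bar>b (inv (fst p) \<otimes> snd p)\<bar>)"
    by (simp add: sum.cartesian_product' sum_distrib_left sum.swap[of _ F] mult_ac a_def b_def e_def)
  also have "\<dots> \<le> sqrt (C * B) * B * L2_set a Y * L * L2_set b ((\<lambda>p. inv (fst p) \<otimes> snd p) ` (Y \<times> F))"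
    unfolding L_def
  proof (rule trilinear_sum_le_by_centres)
    show "real (card {p\<in>Y \<times> F. m (fst p) (snd p) = z \<and> inv (fst p) \<otimes> snd p = k}) \<le> C * B" for z k
      by (rule card_centroid_fibre_le_bound[OF bounds]) (use support \<open>F \<subseteq> carrier G\<close> in \<open>simp_all add: Y_def\<close>)
  qed (use \<open>finite Y\<close> \<open>finite F\<close> \<open>0 \<le> B\<close> row column in auto)
  also have "\<dots> \<le> sqrt (C * B) * B * l2_norm G f * L * l2_norm G \<xi>"
  proof (intro mult_mono order_refl)
    show "L2_set a Y \<le> l2_norm G f"
      using l2_norm_group_algebra[OF f] by (simp add: a_def[abs_def] Y_def)
    show "L2_set b ((\<lambda>p. inv (fst p) \<otimes> snd p) ` (Y \<times> F)) \<le> l2_norm G \<xi>"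
      unfolding b_def
      by (rule L2_set_le_l2_norm)
        (use \<open>\<xi> \<in> l2 G\<close> \<open>finite Y\<close> \<open>finite F\<close> \<open>Y \<subseteq> carrier G\<close> \<open>F \<subseteq> carrier G\<close> in \<open>auto intro!: m_closed inv_closed\<close>)
  qed (use \<open>0 \<le> B\<close> in \<open>simp_all add: L_def l2_norm_nonneg\<close>)
  finally have "L * L \<le> (sqrt (C * B) * B * l2_norm G f * l2_norm G \<xi>) * L"
    by (simp add: power2_eq_square mult_ac)
  moreover have "0 \<le> sqrt (C * B) * B * l2_norm G f * l2_norm G \<xi>"
    using \<open>0 \<le> B\<close> by (simp add: l2_norm_nonneg)
  ultimately show ?thesis
    unfolding L_def e_def by (smt (verit) L2_set_nonneg mult_strict_right_mono)
qed

lemma op_norm_convolution_le: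
  fixes m :: "'g \<Rightarrow> 'g \<Rightarrow> 'x" and B :: real
  assumes bounds: "centroid_bounds G S act m n B"
    and "f \<in> group_algebra G" "{x. f x \<noteq> 0} \<subseteq> ball_G G S n"
  shows "op_norm G f \<le> sqrt (C * B) * B * l2_norm G f"
proof (rule op_norm_le)
  fix \<xi> assume "\<xi> \<in> l2 G"
  show "l2_norm G (convolution G f \<xi>) \<le> sqrt (C * B) * B * l2_norm G f * l2_norm G \<xi>"
    by (rule l2_norm_le_if_L2_set_le) (rule L2_set_convolution_le[OF assms \<open>\<xi> \<in> l2 G\<close>])
next
  show "0 \<le> sqrt (C * B) * B * l2_norm G f"
    using centroid_bounds_nonneg[OF is_group bounds] by (simp add: l2_norm_nonneg)
qed

end

theorem theorem3:
  fixes G :: "('g, 'b) monoid_scheme" and S :: "'g set"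
    and act :: "'g \<Rightarrow> 'x::metric_space \<Rightarrow> 'x" and m :: "'g \<Rightarrow> 'g \<Rightarrow> 'x"
  assumes "group G"
    and "finite S" and "S \<subseteq> carrier G" and "generate G S = carrier G"
    and "isometric_action G act"
    and "uniformly_bounded_stabilizers G act"
    and "centroid_map G S act m"
  shows "property_RD G S"
proof -
  obtain C where "bounded_stabilizer_action G act C"
    using bounded_stabilizer_actionI assms(1,5,6) by blast
  then interpret bounded_stabilizer_action G act C .
  obtain P where bounds: "\<And>r. centroid_bounds G S act m r (poly P (real r))"
    using assms(7) unfolding centroid_map_iff_centroid_bounds by blast
  define Q where "Q = smult (1/2) (([:real C:] + P) * P)"
  have "op_norm G f \<le> poly Q (real (length_fun G S f)) * l2_norm G f" if f: "f \<in> group_algebra G" for f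
  proof -
    define B where "B = poly P (real (length_fun G S f))"
    have "0 \<le> B"
      unfolding B_def by (rule centroid_bounds_nonneg[OF assms(1) bounds])
    have "op_norm G f \<le> sqrt (C * B) * B * l2_norm G f"
      unfolding B_def by (rule op_norm_convolution_le[OF bounds f support_subset_ball_length_fun[OF f]])
    also have "\<dots> \<le> (C + B) / 2 * B * l2_norm G f"
      using arith_geo_mean_sqrt[of C B] \<open>0 \<le> B\<close> by (intro mult_right_mono) (simp_all add: l2_norm_nonneg)
    also have "\<dots> = poly Q (real (length_fun G S f)) * l2_norm G f"
      by (simp add: Q_def B_def)
    finally show ?thesis .
  qed
  then show ?thesis
    unfolding property_RD_def by blast
qed

end
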